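(* Let $n\ge2$. Every eigenvalue of every standardized Laplacian matrix of order $n$ belongs to the intersection of: (1) the two closed disks of radius $1-1/n$ centered at $1/n$ and at $1-1/n$; (2) the two closed angles (each of opening less than $\pi$), one with vertex $1$ bounded by the two half-lines from $1$ through $e^{-2\pi\mathrm i/n}$ and through $e^{2\pi\mathrm i/n}$, the other with vertex $0$ bounded by the two half-lines from $0$ through $e^{-(\pi/2-\pi/n)\mathrm i}$ and through $e^{(\pi/2-\pi/n)\mathrm i}$; and (3) the band $|\operatorname{Im}z|\le\frac{1}{2n}\cot\frac{\pi}{2n}$.
   Context: A standardized Laplacian matrix of order $n$ is a real $n\times n$ matrix whose row sums are all $0$ and whose off-diagonal entries are nonpositive with absolute value at most $1/n$. *)

theory Defs
  imports Complex_Main "Jordan_Normal_Form.Char_Poly"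
begin

definition standardized_laplacian :: "nat \<Rightarrow> real mat \<Rightarrow> bool" where
  "standardized_laplacian n A \<longleftrightarrow>
     A \<in> carrier_mat n n \<and>
     (\<forall>i<n. (\<Sum>j<n. A $$ (i, j)) = 0) \<and>
     (\<forall>i<n. \<forall>j<n. i \<noteq> j \<longrightarrow> A $$ (i, j) \<le> 0 \<and> \<bar>A $$ (i, j)\<bar> \<le> 1 / real n)"

text \<open>Closed angle with vertex v bounded by the half-lines from v through a and through b
  (opening less than pi): the convex cone v + s (a - v) + t (b - v), s, t >= 0.\<close>
definition closed_angle :: "complex \<Rightarrow> complex \<Rightarrow> complex \<Rightarrow> complex set" where
  "closed_angle v a b = {v + of_real s * (a - v) + of_real t * (b - v) | s t. s \<ge> 0 \<and> t \<ge> 0}"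

end

theory Submission
  imports Defs
begin

(* Let L be a standardized
   Laplacian of order n >= 2 and (x, lam) a complex eigenpair.
   - Disk around 1 - 1/n: Gershgorin, since each diagonal entry lies in [0, 1 - 1/n] and
     equals the sum of the absolute values of the off-diagonal entries in its row.
   - Angle at 0: the entries x i span a convex polygon. For Im lam > 0, walking along its
     boundary yields m <= n ratios w k = x (next) / x (current) in the upper half-plane with
     product 1, and the eigen-equation at each vertex gives |w k| sin phi <= sin (Arg w k + phi)
     for phi = Arg lam; Jensen's inequality for ln o sin then forces phi <= pi/2 - pi/n.
   - Band: 2 Im lam |x|^2 is the form of the skew part of L, whose entries are at most 1/n;
     the remaining sum of |Im (cnj (x i) * x l)| is bounded sharply by diagonalizing the
     "sign kernel" with a discrete Fourier transform based on the n-th roots of -1.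
   - Disk around 1/n and angle at 1: I - L - J/n is again a standardized Laplacian with
     eigenvalue 1 - lam (for lam not 0 or 1), so 1 - lam satisfies the first two bounds. *)

lemma cot_strict_decreasing:
  fixes s t :: real
  assumes "0 < s" "s < t" "t < pi"
  shows "cot t < cot s"
proof -
  have ss: "sin s > 0" and st: "sin t > 0" using assms by (intro sin_gt_zero; simp)+
  have "sin (t - s) > 0" using assms by (intro sin_gt_zero) auto
  hence "cos t * sin s < cos s * sin t" by (simp add: sin_diff mult.commute)
  hence "cos t / sin t < cos s / sin s" using ss st by (simp add: divide_simps)
  thus ?thesis by (simp add: cot_def)
qed

lemma pi_div_bounds:
  assumes "n \<ge> 2"
  shows "0 < pi / real n" "pi / real n \<le> pi / 2" "sin (pi / real n) > 0" "cos (pi / real n) \<ge> 0"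
proof -
  show lo: "0 < pi / real n" and hi: "pi / real n \<le> pi / 2" using assms by (auto simp: field_simps)
  show "sin (pi / real n) > 0" using lo hi pi_gt_zero by (intro sin_gt_zero) linarith+
  show "cos (pi / real n) \<ge> 0" using lo hi by (intro cos_ge_zero) linarith+
qed

lemma ln_sin_below_tangent:
  fixes a c :: real
  assumes a: "0 < a" "a < pi" and c: "0 < c" "c < pi"
  shows "ln (sin a) \<le> ln (sin c) + cot c * (a - c)"
proof -
  define g where "g t = ln (sin t) - cot c * t" for t
  have D: "DERIV g t :> cot t - cot c" if "0 < t" "t < pi" for t
  proof -
    have "sin t > 0" using that by (intro sin_gt_zero) auto
    hence "DERIV g t :> cos t / sin t - cot c * 1"
      unfolding g_def by (auto intro!: derivative_eq_intros)
    thus ?thesis by (simp add: cot_def)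
  qed
  have "g a \<le> g c"
  proof (cases a c rule: linorder_cases)
    case less
    then obtain y where y: "a < y" "y < c" "g c - g a = (c - a) * (cot y - cot c)"
      using MVT2[of a c g "\<lambda>t. cot t - cot c"] D a c by force
    have "cot c < cot y" using y a c by (intro cot_strict_decreasing) auto
    with y less show ?thesis by (smt (verit) mult_pos_pos)
  next
    case greater
    then obtain y where y: "c < y" "y < a" "g a - g c = (a - c) * (cot y - cot c)"
      using MVT2[of c a g "\<lambda>t. cot t - cot c"] D a c by force
    have "cot y < cot c" using y a c by (intro cot_strict_decreasing) auto
    with y greater show ?thesis by (smt (verit) mult_pos_neg)
  qed simp
  thus ?thesis unfolding g_def by (simp add: algebra_simps)
qed

lemma sum_ln_sin_le:
  fixes a :: "nat \<Rightarrow> real"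
  assumes m: "m > 0" and a: "\<And>k. k < m \<Longrightarrow> 0 < a k \<and> a k < pi"
  shows "(\<Sum>k<m. ln (sin (a k))) \<le> real m * ln (sin ((\<Sum>k<m. a k) / real m))"
proof -
  define c where "c = (\<Sum>k<m. a k) / real m"
  have "(\<Sum>k<m. 0) < (\<Sum>k<m. a k)" "(\<Sum>k<m. a k) < (\<Sum>k<m. pi)"
    using a m by (intro sum_strict_mono; auto)+
  hence c: "0 < c" "c < pi" using m by (simp_all add: c_def field_simps)
  have "(\<Sum>k<m. ln (sin (a k))) \<le> (\<Sum>k<m. ln (sin c) + cot c * (a k - c))"
    using a c by (intro sum_mono ln_sin_below_tangent) auto
  also have "\<dots> = real m * ln (sin c) + cot c * ((\<Sum>k<m. a k) - real m * c)"
    by (simp add: sum.distrib sum_distrib_left sum_subtractf algebra_simps)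
  also have "(\<Sum>k<m. a k) - real m * c = 0" using m by (simp add: c_def)
  finally show ?thesis by (simp add: c_def)
qed

lemma Arg_in_open_upper_half:
  assumes "Im w > 0"
  shows "0 < Arg w \<and> Arg w < pi"
proof -
  have w0: "w \<noteq> 0" using assms by auto
  have s: "sin (Arg w) > 0" using sin_Arg[OF w0] assms w0 by simp
  have b: "- pi < Arg w" "Arg w \<le> pi" using Arg_bounded by auto
  have "\<not> Arg w \<le> 0"
  proof
    assume "Arg w \<le> 0"
    hence "sin (- Arg w) \<ge> 0" using b by (intro sin_ge_zero) auto
    with s show False by simp
  qed
  moreover have "Arg w \<noteq> pi" using s by auto
  ultimately show ?thesis using b by simp
qed

lemma polar_form: "w = of_real (cmod w) * cis (Arg w)"
  using rcis_cmod_Arg[of w] by (simp add: rcis_def)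

lemma prod_cis: "(\<Prod>k<(m::nat). cis (t k)) = cis (\<Sum>k<m. t k)"
  by (induction m) (auto simp: cis_mult)

text \<open>If numbers in the open upper half-plane multiply to 1, their arguments, each in
  (0, pi), add up to a positive multiple of 2 pi.\<close>
lemma sum_Arg_ge_2pi:
  fixes w :: "nat \<Rightarrow> complex"
  assumes m: "m \<ge> 1" and im: "\<And>k. k < m \<Longrightarrow> Im (w k) > 0" and prod: "(\<Prod>k<m. w k) = 1"
  shows "(\<Sum>k<m. Arg (w k)) \<ge> 2 * pi"
proof -
  have norm_prod: "(\<Prod>k<m. cmod (w k)) = 1"
    using arg_cong[OF prod, of norm] by (simp add: prod_norm)
  have "(\<Prod>k<m. w k) = (\<Prod>k<m. of_real (cmod (w k)) * cis (Arg (w k)))"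
    by (intro prod.cong refl) (rule polar_form)
  also have "\<dots> = of_real (\<Prod>k<m. cmod (w k)) * cis (\<Sum>k<m. Arg (w k))"
    by (simp add: prod.distrib prod_cis)
  finally have "cis (\<Sum>k<m. Arg (w k)) = 1" using prod norm_prod by simp
  hence "cos (\<Sum>k<m. Arg (w k)) = 1" by (metis cis.sel(1) one_complex.sel(1))
  then obtain N :: int where N: "(\<Sum>k<m. Arg (w k)) = real_of_int N * 2 * pi"
    using cos_one_2pi_int by blast
  have "(\<Sum>k<m. 0) < (\<Sum>k<m. Arg (w k))"
    using im m Arg_in_open_upper_half by (intro sum_strict_mono) (auto simp: lessThan_empty_iff)
  hence "N \<ge> 1" using N by (simp add: zero_less_mult_iff)
  thus ?thesis using N by (simp add: mult_le_cancel_right1[symmetric])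
qed

lemma turn_angle_range:
  assumes im: "Im w > 0" and phi: "0 < phi" "phi \<le> pi / 2"
    and turn: "cmod w * sin phi \<le> sin (Arg w + phi)"
  shows "0 < Arg w + phi" and "Arg w + phi < pi"
proof -
  have arg: "0 < Arg w" "Arg w < pi" using Arg_in_open_upper_half[OF im] by auto
  thus "0 < Arg w + phi" using phi by simp
  have "sin phi > 0" using phi by (intro sin_gt_zero) auto
  moreover have "w \<noteq> 0" using im by auto
  ultimately have "cmod w * sin phi > 0" by simp
  hence "sin (Arg w + phi) > 0" using turn by simp
  moreover have "Arg w + phi < 2 * pi" using arg phi by simp
  ultimately show "Arg w + phi < pi" using sin_le_zero[of "Arg w + phi"] by linarith
qed

lemma sum_ln_turn:
  fixes w :: "nat \<Rightarrow> complex" and phi :: real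
  assumes im: "\<And>k. k < m \<Longrightarrow> Im (w k) > 0" and prod: "(\<Prod>k<m. w k) = 1"
    and phi: "0 < phi" "phi \<le> pi / 2"
    and turn: "\<And>k. k < m \<Longrightarrow> cmod (w k) * sin phi \<le> sin (Arg (w k) + phi)"
  shows "real m * ln (sin phi) \<le> (\<Sum>k<m. ln (sin (Arg (w k) + phi)))"
proof -
  have w0: "w k \<noteq> 0" if "k < m" for k using im[OF that] by auto
  have sin_phi: "sin phi > 0" using phi by (intro sin_gt_zero) auto
  have "(\<Sum>k<m. ln (cmod (w k))) = ln (\<Prod>k<m. cmod (w k))"
    by (rule ln_prod[symmetric]) (use w0 in auto)
  also have "(\<Prod>k<m. cmod (w k)) = 1"
    using arg_cong[OF prod, of norm] by (simp add: prod_norm)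
  finally have "real m * ln (sin phi) = (\<Sum>k<m. ln (cmod (w k)) + ln (sin phi))"
    by (simp add: sum.distrib)
  also have "\<dots> \<le> (\<Sum>k<m. ln (sin (Arg (w k) + phi)))"
  proof (intro sum_mono)
    fix k assume "k \<in> {..<m}"
    hence k: "k < m" by simp
    have "cmod (w k) * sin phi > 0" using w0[OF k] sin_phi by simp
    hence "ln (cmod (w k) * sin phi) \<le> ln (sin (Arg (w k) + phi))" using turn[OF k] by simp
    thus "ln (cmod (w k)) + ln (sin phi) \<le> ln (sin (Arg (w k) + phi))"
      using w0[OF k] sin_phi by (simp add: ln_mult)
  qed
  finally show ?thesis .
qed

text \<open>The key angular estimate: along a cycle of m ratios with product 1 satisfying the
  turning condition, Jensen gives sin phi \<le> sin c for the mean c of Arg w k + phi, while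
  c \<ge> 2 pi / m + phi as the arguments add up to at least 2 pi; hence phi \<le> pi/2 - pi/m.\<close>
lemma cycle_angle_bound:
  fixes w :: "nat \<Rightarrow> complex" and phi :: real
  assumes m: "m \<ge> 1" and im: "\<And>k. k < m \<Longrightarrow> Im (w k) > 0"
    and prod: "(\<Prod>k<m. w k) = 1" and phi: "0 < phi" "phi \<le> pi / 2"
    and turn: "\<And>k. k < m \<Longrightarrow> cmod (w k) * sin phi \<le> sin (Arg (w k) + phi)"
  shows "phi \<le> pi / 2 - pi / real m"
proof (rule ccontr)
  assume "\<not> phi \<le> pi / 2 - pi / real m"
  hence phi_big: "pi - 2 * phi < 2 * pi / real m" by (simp add: field_simps)
  define a where "a k = Arg (w k) + phi" for k
  define c where "c = (\<Sum>k<m. a k) / real m"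
  have a: "0 < a k \<and> a k < pi" if "k < m" for k
    using turn_angle_range[OF im[OF that] phi turn[OF that]] by (simp add: a_def)
  have "real m * ln (sin phi) \<le> (\<Sum>k<m. ln (sin (a k)))"
    using sum_ln_turn[OF im prod phi turn] by (simp add: a_def)
  also have "\<dots> \<le> real m * ln (sin c)"
    unfolding c_def using m a by (intro sum_ln_sin_le) auto
  finally have "ln (sin phi) \<le> ln (sin c)" using m by simp
  moreover have "c < pi"
  proof -
    have "(\<Sum>k<m. a k) < (\<Sum>k<m. pi)"
      using a m by (intro sum_strict_mono) (auto simp: lessThan_empty_iff)
    thus ?thesis using m by (simp add: c_def field_simps)
  qed
  moreover have "c > pi - phi"
  proof -
    have "c = (\<Sum>k<m. Arg (w k)) / real m + phi"
      using m by (simp add: c_def a_def sum.distrib field_simps)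
    moreover have "(\<Sum>k<m. Arg (w k)) / real m \<ge> 2 * pi / real m"
      using sum_Arg_ge_2pi[OF m im prod] m by (simp add: divide_right_mono)
    ultimately show ?thesis using phi_big by linarith
  qed
  ultimately have "sin phi \<le> sin (pi - c)"
    using phi sin_gt_zero[of phi] sin_gt_zero[of c] by simp
  moreover have "sin (pi - c) < sin phi"
    using \<open>c < pi\<close> \<open>c > pi - phi\<close> phi by (intro sin_monotone_2pi) auto
  ultimately show False by simp
qed

lemma cnj_mult_self: "cnj z * z = of_real ((cmod z)\<^sup>2)"
  by (simp only: complex_norm_square mult.commute)

lemma cnj_mult_self_scaled: "cnj z * c * z = of_real ((cmod z)\<^sup>2) * c"
  using cnj_mult_self[of z] by (simp add: mult_ac)

lemma Arg_nonneg_of_Im_nonneg: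
  assumes "z \<noteq> 0" "Im z \<ge> 0"
  shows "0 \<le> Arg z"
proof (rule ccontr)
  assume "\<not> 0 \<le> Arg z"
  moreover have "- pi < Arg z" using Arg_bounded by auto
  ultimately have "sin (- Arg z) > 0" by (intro sin_gt_zero) auto
  moreover have "sin (Arg z) = Im z / cmod z" using sin_Arg[OF assms(1)] .
  moreover have "Im z / cmod z \<ge> 0" using assms by simp
  ultimately show False by simp
qed

lemma Im_cnj_mult_polar:
  assumes "a \<noteq> 0" "b \<noteq> 0"
  shows "Im (cnj a * b) = cmod a * cmod b * sin (Arg b - Arg a)"
proof -
  have "cnj a * b = of_real (cmod a * cmod b) * (cis (- Arg a) * cis (Arg b))"
    by (subst (1 2) polar_form) (simp add: cis_cnj)
  thus ?thesis by (simp add: cis_mult)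
qed

lemma Im_mult_polar:
  assumes "a \<noteq> 0" "b \<noteq> 0"
  shows "Im (a * b) = cmod a * cmod b * sin (Arg a + Arg b)"
proof -
  have "a * b = of_real (cmod a * cmod b) * (cis (Arg a) * cis (Arg b))"
    by (subst (1 2) polar_form) simp
  thus ?thesis by (simp add: cis_mult)
qed

lemma extreme_direction_in_halfplane:
  fixes d :: "nat \<Rightarrow> complex"
  assumes fin: "finite J" and ne: "J \<noteq> {}" and d0: "\<And>l. l \<in> J \<Longrightarrow> d l \<noteq> 0"
    and u: "u \<noteq> 0" and halfplane: "\<And>l. l \<in> J \<Longrightarrow> Re (cnj u * d l) \<le> 0"
  shows "\<exists>j\<in>J. \<forall>l\<in>J. Im (cnj (d j) * d l) \<ge> 0"
proof -
  define e where "e l = - \<i> * cnj u * d l" for l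
  have e0: "e l \<noteq> 0" if "l \<in> J" for l using d0[OF that] u by (simp add: e_def)
  have e_upper: "Im (e l) \<ge> 0" if "l \<in> J" for l using halfplane[OF that] by (simp add: e_def)
  have "Min ((\<lambda>l. Arg (e l)) ` J) \<in> (\<lambda>l. Arg (e l)) ` J" using fin ne by (intro Min_in) auto
  then obtain j where j: "j \<in> J" "Arg (e j) = Min ((\<lambda>l. Arg (e l)) ` J)" by auto
  hence j_min: "Arg (e j) \<le> Arg (e l)" if "l \<in> J" for l using fin that by simp
  have "Im (cnj (d j) * d l) \<ge> 0" if l: "l \<in> J" for l
  proof -
    have "0 \<le> Arg (e j)" by (rule Arg_nonneg_of_Im_nonneg[OF e0[OF j(1)] e_upper[OF j(1)]])
    moreover have "Arg (e l) \<le> pi" using Arg_bounded by auto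
    ultimately have "sin (Arg (e l) - Arg (e j)) \<ge> 0" using j_min[OF l] by (intro sin_ge_zero) auto
    hence "Im (cnj (e j) * e l) \<ge> 0" using Im_cnj_mult_polar[OF e0[OF j(1)] e0[OF l]] by simp
    moreover have "cnj (e j) * e l = of_real ((cmod u)\<^sup>2) * (cnj (d j) * d l)"
      using cnj_mult_self[of u] by (simp add: e_def mult_ac)
    ultimately show ?thesis using u by (simp add: zero_le_mult_iff)
  qed
  with j show ?thesis by blast
qed

text \<open>The local turning condition along a convex polygon: if the edge from p to q, rotated
  by the eigenvalue, points to the right of q, then the ratio w = q / p satisfies the
  hypothesis of the cycle angle bound with angle Arg lam.\<close>
lemma turn_condition:
  fixes p q lam :: complex
  assumes p: "p \<noteq> 0" and q: "q \<noteq> 0" and lam: "lam \<noteq> 0"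
    and right: "Im (cnj (q - p) * lam * q) \<le> 0"
  shows "cmod (q / p) * sin (Arg lam) \<le> sin (Arg (q / p) + Arg lam)"
proof -
  define w where "w = q / p"
  have w0: "w \<noteq> 0" using p q by (simp add: w_def)
  have "cnj (q - p) * lam * q = (cnj p * p) * ((cnj w * w) * lam - w * lam)"
    using p by (simp add: w_def algebra_simps)
  hence "Im (cnj (q - p) * lam * q) = (cmod p)\<^sup>2 * ((cmod w)\<^sup>2 * Im lam - Im (w * lam))"
    by (simp only: cnj_mult_self) simp
  with right p have "(cmod w)\<^sup>2 * Im lam \<le> Im (w * lam)" by (simp add: mult_le_0_iff)
  moreover have "Im lam = cmod lam * sin (Arg lam)" using sin_Arg[OF lam] lam by simp
  moreover have "Im (w * lam) = cmod w * cmod lam * sin (Arg w + Arg lam)"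
    by (rule Im_mult_polar[OF w0 lam])
  ultimately have "cmod lam * (cmod w * (cmod w * sin (Arg lam)))
      \<le> cmod lam * (cmod w * sin (Arg w + Arg lam))"
    by (simp add: power2_eq_square mult_ac)
  thus ?thesis using lam w0 by (simp add: w_def)
qed

lemma ex_max_index:
  fixes f :: "nat \<Rightarrow> real"
  assumes "n > 0"
  shows "\<exists>i<n. \<forall>l<n. f l \<le> f i"
proof -
  have "Max (f ` {..<n}) \<in> f ` {..<n}" using assms by (intro Max_in) auto
  then obtain i where "i < n" "f i = Max (f ` {..<n})" by auto
  thus ?thesis by auto
qed

text \<open>An eigenpair (x, lam) of a Laplacian-type matrix L (zero row sums, nonpositive
  off-diagonal entries); matrices are represented as functions on indices below n.\<close>
locale laplacian_eigenpair =
  fixes n :: nat and L :: "nat \<Rightarrow> nat \<Rightarrow> real" and x :: "nat \<Rightarrow> complex" and lam :: complex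
  assumes row_sum: "\<And>i. i < n \<Longrightarrow> (\<Sum>l<n. L i l) = 0"
    and off_diag_nonpos: "\<And>i l. i < n \<Longrightarrow> l < n \<Longrightarrow> i \<noteq> l \<Longrightarrow> L i l \<le> 0"
    and eigen: "\<And>i. i < n \<Longrightarrow> (\<Sum>l<n. of_real (L i l) * x l) = lam * x i"
    and nonzero: "\<exists>i<n. x i \<noteq> 0"
begin

lemma n_pos: "n > 0" using nonzero by auto

text \<open>Because the rows sum to zero, the eigen-equation is a weighted sum of differences.\<close>
lemma eigen_diff:
  assumes i: "i < n"
  shows "lam * x i = (\<Sum>l<n. of_real (L i l) * (x l - x i))"
proof -
  have "(\<Sum>l<n. of_real (L i l) * (x l - x i))
      = (\<Sum>l<n. of_real (L i l) * x l) - of_real (\<Sum>l<n. L i l) * x i"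
    by (simp add: algebra_simps sum_subtractf sum_distrib_right sum_distrib_left)
  thus ?thesis using row_sum[OF i] eigen[OF i] by simp
qed

text \<open>If x i is extreme among the entries of x in the direction u, then lam * x i does not
  point away from u: all neighbours l pull x i back into the half-plane.\<close>
lemma extreme_entry:
  assumes i: "i < n" and extreme: "\<And>l. l < n \<Longrightarrow> Re (cnj u * x l) \<le> Re (cnj u * x i)"
  shows "Re (cnj u * lam * x i) \<ge> 0"
proof -
  have "cnj u * lam * x i = cnj u * (lam * x i)" by (simp add: mult.assoc)
  also have "\<dots> = (\<Sum>l<n. of_real (L i l) * (cnj u * (x l - x i)))"
    unfolding eigen_diff[OF i] by (simp add: sum_distrib_left mult_ac)
  finally have "Re (cnj u * lam * x i) = (\<Sum>l<n. L i l * Re (cnj u * (x l - x i)))"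
    by (simp add: Re_sum)
  also have "\<dots> \<ge> 0"
  proof (intro sum_nonneg)
    fix l assume "l \<in> {..<n}"
    hence l: "l < n" by simp
    have "Re (cnj u * (x l - x i)) \<le> 0" using extreme[OF l] by (simp add: algebra_simps)
    thus "L i l * Re (cnj u * (x l - x i)) \<ge> 0"
      using off_diag_nonpos[OF i l] by (cases "l = i") (auto intro: mult_nonpos_nonpos)
  qed
  finally show ?thesis .
qed

lemma Re_nonneg: "Re lam \<ge> 0"
proof -
  obtain i where i: "i < n" "\<And>l. l < n \<Longrightarrow> cmod (x l) \<le> cmod (x i)"
    using ex_max_index[OF n_pos, of "\<lambda>l. cmod (x l)"] by auto
  have xi: "x i \<noteq> 0" using i(2) nonzero by fastforce
  have "Re (cnj (x i) * lam * x i) \<ge> 0"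
  proof (rule extreme_entry[OF i(1)])
    fix l assume l: "l < n"
    have "Re (cnj (x i) * x l) \<le> cmod (x i) * cmod (x l)"
      using complex_Re_le_cmod[of "cnj (x i) * x l"] by (simp add: norm_mult)
    also have "\<dots> \<le> (cmod (x i))\<^sup>2" using i(2)[OF l] by (simp add: power2_eq_square mult_left_mono)
    finally show "Re (cnj (x i) * x l) \<le> Re (cnj (x i) * x i)" by (simp only: cnj_mult_self) simp
  qed
  hence "(cmod (x i))\<^sup>2 * Re lam \<ge> 0" by (simp only: cnj_mult_self_scaled) simp
  thus ?thesis using xi by (simp add: zero_le_mult_iff)
qed


lemma eigenvector_nonconstant:
  assumes "lam \<noteq> 0" and i: "i < n"
  shows "\<exists>l<n. x l \<noteq> x i"
proof (rule ccontr)
  assume "\<not> (\<exists>l<n. x l \<noteq> x i)"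
  hence const: "\<And>l. l < n \<Longrightarrow> x l = x i" by auto
  obtain k where k: "k < n" "x k \<noteq> 0" using nonzero by auto
  have "lam * x k = 0" unfolding eigen_diff[OF k(1)] using const k(1) by (intro sum.neutral) auto
  thus False using k assms by simp
qed

text \<open>For a non-real eigenvalue, 0 lies in the interior of the convex hull of the entries:
  no closed half-plane bounded by a line through 0 contains all of them.\<close>
lemma entries_not_in_halfplane:
  assumes im: "Im lam > 0" and u: "u \<noteq> 0"
  shows "\<exists>l<n. Re (cnj u * x l) > 0"
proof (rule ccontr)
  assume "\<not> (\<exists>l<n. Re (cnj u * x l) > 0)"
  hence "\<And>l. l \<in> {l. l < n \<and> x l \<noteq> 0} \<Longrightarrow> Re (cnj u * x l) \<le> 0" by force
  hence "\<exists>p\<in>{l. l < n \<and> x l \<noteq> 0}. \<forall>l\<in>{l. l < n \<and> x l \<noteq> 0}. Im (cnj (x p) * x l) \<ge> 0"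
    using nonzero u by (intro extreme_direction_in_halfplane) auto
  then obtain p where p: "p < n" "x p \<noteq> 0"
    and ccw: "\<And>l. l < n \<Longrightarrow> x l \<noteq> 0 \<Longrightarrow> Im (cnj (x p) * x l) \<ge> 0"
    by blast
  have "Re (cnj (- \<i> * x p) * lam * x p) \<ge> 0"
  proof (rule extreme_entry[OF p(1)])
    fix l assume "l < n"
    hence "Im (cnj (x p) * x l) \<ge> 0" using ccw by (cases "x l = 0") auto
    moreover have "Im (cnj (x p) * x p) = 0" by simp
    ultimately show "Re (cnj (- \<i> * x p) * x l) \<le> Re (cnj (- \<i> * x p) * x p)"
      by (simp add: algebra_simps)
  qed
  moreover have "cnj (- \<i> * x p) * lam * x p = \<i> * (of_real ((cmod (x p))\<^sup>2) * lam)"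
    using cnj_mult_self_scaled[of "x p" lam] by (simp add: mult_ac)
  ultimately have "Re (\<i> * (of_real ((cmod (x p))\<^sup>2) * lam)) \<ge> 0" by metis
  hence "(cmod (x p))\<^sup>2 * Im lam \<le> 0" by simp
  thus False using im p(2) by (simp add: mult_le_0_iff)
qed

text \<open>The entries of x span a convex polygon. A support vertex is an entry that is extreme
  in some direction u; a hull edge from i to j is a pair of distinct entries such that all
  entries lie weakly to the left of the directed line from x i to x j.\<close>
definition support_vertex :: "nat \<Rightarrow> bool" where
  "support_vertex i \<longleftrightarrow> i < n \<and> (\<exists>u. u \<noteq> 0 \<and> (\<forall>l<n. Re (cnj u * x l) \<le> Re (cnj u * x i)))"

definition hull_edge :: "nat \<Rightarrow> nat \<Rightarrow> bool" where
  "hull_edge i j \<longleftrightarrow> j < n \<and> x j \<noteq> x i \<and> (\<forall>l<n. Im (cnj (x j - x i) * (x l - x i)) \<ge> 0)"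

lemma support_vertex_exists: "\<exists>i. support_vertex i"
proof -
  obtain i where "i < n" "\<And>l. l < n \<Longrightarrow> Re (x l) \<le> Re (x i)"
    using ex_max_index[OF n_pos, of "\<lambda>l. Re (x l)"] by auto
  hence "support_vertex i" unfolding support_vertex_def by (intro conjI exI[of _ 1]) auto
  thus ?thesis by blast
qed

lemma hull_edge_exists:
  assumes "lam \<noteq> 0" "support_vertex i"
  shows "\<exists>j. hull_edge i j"
proof -
  from assms(2) obtain u where i: "i < n" and u: "u \<noteq> 0"
    and extreme: "\<And>l. l < n \<Longrightarrow> Re (cnj u * x l) \<le> Re (cnj u * x i)"
    unfolding support_vertex_def by auto
  let ?J = "{l. l < n \<and> x l \<noteq> x i}"
  have "?J \<noteq> {}" using eigenvector_nonconstant[OF assms(1) i] by auto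
  moreover have "Re (cnj u * (x l - x i)) \<le> 0" if "l \<in> ?J" for l
    using extreme[of l] that by (simp add: algebra_simps)
  ultimately obtain j where j: "j \<in> ?J"
    and ccw: "\<And>l. l \<in> ?J \<Longrightarrow> Im (cnj (x j - x i) * (x l - x i)) \<ge> 0"
    using extreme_direction_in_halfplane[of ?J "\<lambda>l. x l - x i" u] u by auto
  have "Im (cnj (x j - x i) * (x l - x i)) \<ge> 0" if "l < n" for l
    using ccw[of l] that by (cases "x l = x i") auto
  with j show ?thesis unfolding hull_edge_def by blast
qed

lemma hull_edge_support:
  assumes "hull_edge i j" and l: "l < n"
  shows "Re (cnj (- \<i> * (x j - x i)) * x l) \<le> Re (cnj (- \<i> * (x j - x i)) * x i)"
    and "Re (cnj (- \<i> * (x j - x i)) * x l) \<le> Re (cnj (- \<i> * (x j - x i)) * x j)"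
proof -
  have left: "Im (cnj (x j - x i) * (x l - x i)) \<ge> 0" using assms unfolding hull_edge_def by auto
  thus "Re (cnj (- \<i> * (x j - x i)) * x l) \<le> Re (cnj (- \<i> * (x j - x i)) * x i)"
    by (simp add: algebra_simps)
  have "Im (cnj (x j - x i) * (x j - x i)) = 0" by (simp only: cnj_mult_self Im_complex_of_real)
  thus "Re (cnj (- \<i> * (x j - x i)) * x l) \<le> Re (cnj (- \<i> * (x j - x i)) * x j)"
    using left by (simp add: algebra_simps)
qed

lemma hull_edge_end_vertex:
  assumes "hull_edge i j" shows "support_vertex j"
proof -
  have "j < n" "- \<i> * (x j - x i) \<noteq> 0" using assms unfolding hull_edge_def by auto
  with hull_edge_support(2)[OF assms] show ?thesis unfolding support_vertex_def by blast
qed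

text \<open>Along a hull edge the polygon turns counterclockwise around 0, and the eigen-equation
  at the end vertex forces lam * x j to point to the right of the edge.\<close>
lemma hull_edge_turn:
  assumes im: "Im lam > 0" and edge: "hull_edge i j" and i: "i < n"
  shows "Im (cnj (x i) * x j) > 0" and "Im (cnj (x j - x i) * lam * x j) \<le> 0"
proof -
  let ?u = "- \<i> * (x j - x i)"
  have "?u \<noteq> 0" using edge unfolding hull_edge_def by auto
  then obtain l where l: "l < n" "Re (cnj ?u * x l) > 0"
    using entries_not_in_halfplane[OF im] by blast
  have "Re (cnj ?u * x i) > 0" using hull_edge_support(1)[OF edge l(1)] l(2) by linarith
  thus "Im (cnj (x i) * x j) > 0" by (simp add: algebra_simps)
  have j: "j < n" using edge unfolding hull_edge_def by auto
  have "Re (cnj ?u * lam * x j) \<ge> 0" by (rule extreme_entry[OF j hull_edge_support(2)[OF edge]])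
  thus "Im (cnj (x j - x i) * lam * x j) \<le> 0" by (simp add: algebra_simps)
qed
text \<open>Following hull edges from a support vertex, some entry must repeat within n steps;
  this yields a closed walk p 0, ..., p m = p 0 of length m \<le> n along the polygon.\<close>
lemma closed_hull_walk:
  assumes im: "Im lam > 0"
  obtains m p where "1 \<le> m" "m \<le> n" "p m = p 0"
    "\<And>k. Im (cnj (p k) * p (Suc k)) > 0"
    "\<And>k. Im (cnj (p (Suc k) - p k) * lam * p (Suc k)) \<le> 0"
proof -
  have lam0: "lam \<noteq> 0" using im by auto
  define next_vertex where "next_vertex i = (SOME j. hull_edge i j)" for i
  have next_edge: "hull_edge i (next_vertex i)" if "support_vertex i" for i
    unfolding next_vertex_def using hull_edge_exists[OF lam0 that] by (rule someI_ex)
  obtain i0 where i0: "support_vertex i0" using support_vertex_exists by blast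
  define walk where "walk k = (next_vertex ^^ k) i0" for k
  have walk_vertex: "support_vertex (walk k)" for k
    by (induction k) (auto simp: walk_def i0 intro: hull_edge_end_vertex next_edge)
  have walk_lt: "walk k < n" for k using walk_vertex[of k] unfolding support_vertex_def by blast
  have walk_edge: "hull_edge (walk k) (walk (Suc k))" for k
    using next_edge[OF walk_vertex[of k]] by (simp add: walk_def)
  have "\<not> inj_on walk {..n}"
  proof
    assume "inj_on walk {..n}"
    hence "card (walk ` {..n}) = Suc n" by (simp add: card_image)
    moreover have "card (walk ` {..n}) \<le> card {..<n}" by (rule card_mono) (auto simp: walk_lt)
    ultimately show False by simp
  qed
  then obtain a b where ab: "a < b" "b \<le> n" "walk a = walk b"
    unfolding inj_on_def by (metis atMost_iff nat_neq_iff)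
  define p where "p k = x (walk (a + k))" for k
  show ?thesis
  proof (rule that[of "b - a" p])
    show "1 \<le> b - a" "b - a \<le> n" "p (b - a) = p 0" using ab by (auto simp: p_def)
    show "Im (cnj (p k) * p (Suc k)) > 0" "Im (cnj (p (Suc k) - p k) * lam * p (Suc k)) \<le> 0" for k
      using hull_edge_turn[OF im walk_edge walk_lt] by (simp_all add: p_def)
  qed
qed

lemma Arg_eigenvalue_range:
  assumes im: "Im lam > 0"
  shows "0 < Arg lam" "Arg lam \<le> pi / 2"
proof -
  have lam0: "lam \<noteq> 0" using im by auto
  show "0 < Arg lam" using Arg_in_open_upper_half[OF im] by simp
  have "cos (Arg lam) \<ge> 0" using cos_Arg[OF lam0] Re_nonneg by simp
  moreover have "Arg lam < pi" using Arg_in_open_upper_half[OF im] by simp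
  ultimately show "Arg lam \<le> pi / 2"
    using cos_gt_zero_pi[of "pi - Arg lam"] by fastforce
qed

text \<open>The ratios of consecutive vertices of the closed walk satisfy the hypotheses of the
  cycle angle bound with phi = Arg lam.\<close>
lemma sector_upper:
  assumes n2: "n \<ge> 2" and im: "Im lam > 0"
  shows "Im lam * sin (pi / n) \<le> cos (pi / n) * Re lam"
proof -
  have lam0: "lam \<noteq> 0" using im by auto
  obtain m p where m: "1 \<le> m" "m \<le> n" and closed: "p m = p 0"
    and ccw: "\<And>k. Im (cnj (p k) * p (Suc k)) > 0"
    and right: "\<And>k. Im (cnj (p (Suc k) - p k) * lam * p (Suc k)) \<le> 0"
    using closed_hull_walk[OF im] by blast
  have p0: "p k \<noteq> 0" for k using ccw[of k] by auto
  define w where "w k = p (Suc k) / p k" for k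
  have w_upper: "Im (w k) > 0" for k
  proof -
    have "w k = (cnj (p k) * p (Suc k)) / of_real ((cmod (p k))\<^sup>2)"
      unfolding w_def by (subst complex_div_cnj) (simp add: mult.commute)
    thus ?thesis using ccw[of k] p0[of k] by simp
  qed
  have "(\<Prod>k<m. w k) = 1"
    unfolding w_def using prod_lessThan_telescope[of m p] p0 closed by simp
  hence "Arg lam \<le> pi / 2 - pi / real m"
    using cycle_angle_bound[OF m(1) w_upper _ Arg_eigenvalue_range[OF im]]
      turn_condition[OF p0 p0 lam0 right] by (simp add: w_def)
  moreover have "pi / real n \<le> pi / real m" using m by (simp add: frac_le)
  ultimately have "Arg lam + pi / n \<le> pi / 2" by linarith
  moreover have "pi / real n \<ge> 0" by simp
  ultimately have "cos (Arg lam + pi / n) \<ge> 0"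
    using Arg_eigenvalue_range[OF im] by (intro cos_ge_zero) linarith+
  hence "cmod lam * (sin (Arg lam) * sin (pi / n)) \<le> cmod lam * (cos (pi / n) * cos (Arg lam))"
    by (simp add: cos_add mult_left_mono mult.commute)
  moreover have "Im lam = cmod lam * sin (Arg lam)" "Re lam = cmod lam * cos (Arg lam)"
    using sin_Arg[OF lam0] cos_Arg[OF lam0] lam0 by simp_all
  ultimately show ?thesis by (simp add: algebra_simps)
qed

lemma conjugate_eigenpair: "laplacian_eigenpair n L (\<lambda>l. cnj (x l)) (cnj lam)"
proof
  fix i assume i: "i < n"
  have "(\<Sum>l<n. of_real (L i l) * cnj (x l)) = cnj (\<Sum>l<n. of_real (L i l) * x l)" by simp
  thus "(\<Sum>l<n. of_real (L i l) * cnj (x l)) = cnj lam * cnj (x i)" using eigen[OF i] by simp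
qed (use row_sum off_diag_nonpos nonzero in auto)

lemma sector:
  assumes n2: "n \<ge> 2"
  shows "\<bar>Im lam\<bar> * sin (pi / n) \<le> cos (pi / n) * Re lam"
proof -
  have cos_nonneg: "cos (pi / n) \<ge> 0" using pi_div_bounds[OF n2] by simp
  consider "Im lam > 0" | "Im lam = 0" | "Im lam < 0" by linarith
  thus ?thesis
  proof cases
    case 1 thus ?thesis using sector_upper[OF n2] by simp
  next
    case 2 thus ?thesis using cos_nonneg Re_nonneg by simp
  next
    case 3
    interpret conj: laplacian_eigenpair n L "\<lambda>l. cnj (x l)" "cnj lam" by (rule conjugate_eigenpair)
    show ?thesis using conj.sector_upper[OF n2] 3 by simp
  qed
qed

end


text \<open>The band bound rests on a sharp inequality for the Hermitian form with the skew
  "sign kernel" sgn (l - j): its largest eigenvalue is cot (pi / (2n)). The kernel is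
  diagonalized by the discrete Fourier basis built from the n-th roots of -1.\<close>
definition sign_kernel :: "nat \<Rightarrow> nat \<Rightarrow> real" where
  "sign_kernel j l = (if j < l then 1 else if l < j then -1 else 0)"

definition odd_root :: "nat \<Rightarrow> nat \<Rightarrow> complex" where
  "odd_root n k = cis ((2 * real k + 1) * pi / real n)"

lemma odd_root_power: "odd_root n k ^ j = cis (real j * ((2 * real k + 1) * pi / real n))"
  by (simp add: odd_root_def DeMoivre)

lemma odd_root_props:
  assumes "k < n"
  shows "odd_root n k ^ n = -1" and "odd_root n k \<noteq> 1"
proof -
  have "odd_root n k ^ n = cis ((2 * real k + 1) * pi)" using assms by (simp add: odd_root_power)
  also have "(2 * real k + 1) * pi = 2 * pi * real k + pi" by (simp add: algebra_simps)
  finally show "odd_root n k ^ n = -1" by (simp add: cis_mult[symmetric])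
  thus "odd_root n k \<noteq> 1" by auto
qed

lemma cot_via_cis:
  assumes "sin a \<noteq> 0"
  shows "\<i> * (cis (2 * a) + 1) / (cis (2 * a) - 1) = of_real (cot a)"
proof -
  have "cis (2 * a) + 1 = cis a * of_real (2 * cos a)"
    by (simp add: complex_eq_iff cos_double_cos sin_double power2_eq_square)
  moreover have "cis (2 * a) - 1 = cis a * (\<i> * of_real (2 * sin a))"
    by (simp add: complex_eq_iff cos_double_sin sin_double power2_eq_square)
  ultimately show ?thesis using assms by (simp add: cot_def field_simps)
qed

lemma odd_angle_range:
  assumes k: "k < n"
  shows "0 < (2 * real k + 1) * pi / (2 * real n)" and "(2 * real k + 1) * pi / (2 * real n) < pi"
proof -
  have "(2 * real k + 1) / (2 * real n) < 1" using k by simp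
  hence "(2 * real k + 1) / (2 * real n) * pi < 1 * pi" by (intro mult_strict_right_mono) auto
  thus "(2 * real k + 1) * pi / (2 * real n) < pi" by simp
  show "0 < (2 * real k + 1) * pi / (2 * real n)" using k by simp
qed

lemma cot_odd_root:
  assumes k: "k < n"
  shows "\<i> * (odd_root n k + 1) / (odd_root n k - 1) = of_real (cot ((2 * real k + 1) * pi / (2 * real n)))"
proof -
  define a where "a = (2 * real k + 1) * pi / (2 * real n)"
  have "0 < a" "a < pi" using odd_angle_range[OF k] by (simp_all add: a_def)
  hence "sin a \<noteq> 0" using sin_gt_zero by force
  moreover have "odd_root n k = cis (2 * a)" using k by (simp add: odd_root_def a_def)
  ultimately show ?thesis using cot_via_cis[of a] by (simp add: a_def)
qed

lemma cot_odd_root_le: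
  assumes k: "k < n"
  shows "cot ((2 * real k + 1) * pi / (2 * real n)) \<le> cot (pi / (2 * real n))"
proof (cases "k = 0")
  case False
  have "(2 * real k + 1) * pi / (2 * real n) < pi" using odd_angle_range[OF k] by simp
  moreover have "pi / (2 * real n) < (2 * real k + 1) * pi / (2 * real n)"
    using False k by (intro divide_strict_right_mono) auto
  ultimately show ?thesis using k by (intro less_imp_le cot_strict_decreasing) auto
qed simp

lemma cis_fraction_ne_1:
  assumes "d \<noteq> 0" "\<bar>d\<bar> < real n"
  shows "cis (2 * d * pi / real n) \<noteq> 1"
proof
  assume "cis (2 * d * pi / real n) = 1"
  hence "cos (2 * d * pi / real n) = 1" by (metis cis.sel(1) one_complex.sel(1))
  then obtain N :: int where "2 * d * pi / real n = real_of_int N * 2 * pi"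
    using cos_one_2pi_int by blast
  hence dN: "d = real_of_int N * real n" using assms by (simp add: field_simps)
  hence "N \<noteq> 0" using assms by auto
  hence "\<bar>real_of_int N\<bar> \<ge> 1" by linarith
  moreover have "real n > 0" using assms by linarith
  ultimately have "\<bar>d\<bar> \<ge> real n" using dN by (simp add: abs_mult)
  thus False using assms by simp
qed

lemma odd_root_orthogonal:
  assumes j: "j < n" and l: "l < n"
  shows "(\<Sum>k<n. odd_root n k ^ j * cnj (odd_root n k) ^ l) = (if j = l then of_nat n else 0)"
proof (cases "j = l")
  case True
  have "odd_root n k ^ j * cnj (odd_root n k) ^ j = 1" for k
    by (simp add: odd_root_def cis_cnj DeMoivre cis_mult)
  thus ?thesis using True by simp
next
  case False
  define d where "d = real j - real l"
  define z where "z = cis (2 * d * pi / real n)"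
  have n0: "real n > 0" using j by simp
  have entry: "odd_root n k ^ j * cnj (odd_root n k) ^ l = cis (d * pi / real n) * z ^ k" for k
  proof -
    have "odd_root n k ^ j * cnj (odd_root n k) ^ l
        = cis (real j * ((2 * real k + 1) * pi / real n) - real l * ((2 * real k + 1) * pi / real n))"
      by (simp add: odd_root_power cis_cnj cis_mult flip: complex_cnj_power)
    also have "\<dots> = cis (d * pi / real n + real k * (2 * d * pi / real n))"
      using n0 by (simp add: d_def field_simps)
    finally show ?thesis by (simp add: z_def DeMoivre cis_mult)
  qed
  have "z ^ n = 1"
  proof -
    have "z ^ n = cis (real n * (2 * d * pi / real n))" by (simp add: z_def DeMoivre)
    also have "real n * (2 * d * pi / real n) = 2 * pi * real_of_int (int j - int l)"
      using n0 by (simp add: d_def field_simps)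
    finally show ?thesis by simp
  qed
  moreover have "z \<noteq> 1"
    unfolding z_def using False j l by (intro cis_fraction_ne_1) (auto simp: d_def)
  ultimately have "(\<Sum>k<n. z ^ k) = 0" by (simp add: geometric_sum)
  thus ?thesis using False by (simp add: entry flip: sum_distrib_left)
qed

lemma sign_kernel_eigen:
  assumes k: "k < n" and j: "j < n"
  shows "(\<Sum>l<n. (- \<i> * of_real (sign_kernel j l)) * odd_root n k ^ l)
       = of_real (cot ((2 * real k + 1) * pi / (2 * real n))) * odd_root n k ^ j"
proof -
  define w where "w = odd_root n k"
  have w1: "w \<noteq> 1" and wn: "w ^ n = -1" using odd_root_props[OF k] by (simp_all add: w_def)
  have geo: "(\<Sum>l<m. w ^ l) = (w ^ m - 1) / (w - 1)" for m using w1 by (rule geometric_sum)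
  have "(\<Sum>l<n. of_real (sign_kernel j l) * w ^ l)
      = (\<Sum>l\<in>{Suc j..<n}. w ^ l) - (\<Sum>l<j. w ^ l)"
  proof -
    have "(\<Sum>l<n. of_real (sign_kernel j l) * w ^ l)
        = (\<Sum>l<n. if j < l then w ^ l else 0) - (\<Sum>l<n. if l < j then w ^ l else 0)"
      by (auto simp: sign_kernel_def sum_subtractf[symmetric] intro!: sum.cong)
    also have "(\<Sum>l<n. if j < l then w ^ l else 0) = (\<Sum>l\<in>{Suc j..<n}. w ^ l)"
      by (simp add: sum.If_cases) (intro sum.cong, auto)
    also have "(\<Sum>l<n. if l < j then w ^ l else 0) = (\<Sum>l<j. w ^ l)"
      using j by (simp add: sum.If_cases) (intro sum.cong, auto)
    finally show ?thesis .
  qed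
  also have "(\<Sum>l\<in>{Suc j..<n}. w ^ l) = (\<Sum>l<n. w ^ l) - (\<Sum>l<Suc j. w ^ l)"
    using sum_diff_nat_ivl[of 0 "Suc j" n "\<lambda>l. w ^ l"] j by (simp add: atLeast0LessThan)
  also have "(\<Sum>l<n. w ^ l) - (\<Sum>l<Suc j. w ^ l) - (\<Sum>l<j. w ^ l)
      = ((w ^ n - 1) - (w ^ Suc j - 1) - (w ^ j - 1)) / (w - 1)"
    by (simp only: geo diff_divide_distrib)
  also have "(w ^ n - 1) - (w ^ Suc j - 1) - (w ^ j - 1) = - (w + 1) * w ^ j"
    using wn by (simp add: algebra_simps)
  finally have "(\<Sum>l<n. of_real (sign_kernel j l) * w ^ l) = - (w + 1) * w ^ j / (w - 1)" .
  hence "(\<Sum>l<n. (- \<i> * of_real (sign_kernel j l)) * w ^ l) = \<i> * (w + 1) / (w - 1) * w ^ j"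
    using w1 by (simp only: mult.assoc flip: sum_distrib_left) (simp add: field_simps)
  thus ?thesis using cot_odd_root[OF k] by (simp add: w_def)
qed

definition odd_dft :: "nat \<Rightarrow> (nat \<Rightarrow> complex) \<Rightarrow> nat \<Rightarrow> complex" where
  "odd_dft n z k = (\<Sum>j<n. cnj (odd_root n k ^ j) * z j)"

lemma sum_swap_scaled:
  fixes a b :: "nat \<Rightarrow> 'a::comm_semiring_1"
  shows "(\<Sum>l<n. b l * (\<Sum>k<m. a k * f k l)) = (\<Sum>k<m. a k * (\<Sum>l<n. b l * f k l))"
  unfolding sum_distrib_left by (subst sum.swap) (simp add: mult_ac)

lemma odd_dft_inversion:
  assumes j: "j < n"
  shows "z j = (\<Sum>k<n. odd_dft n z k / of_nat n * odd_root n k ^ j)"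
proof -
  have "(\<Sum>k<n. odd_dft n z k * odd_root n k ^ j)
      = (\<Sum>l<n. z l * (\<Sum>k<n. odd_root n k ^ j * cnj (odd_root n k) ^ l))"
    unfolding odd_dft_def sum_distrib_right sum_distrib_left
    by (subst sum.swap) (simp add: mult_ac)
  also have "\<dots> = z j * of_nat n" using j by (simp add: odd_root_orthogonal if_distrib cong: if_cong)
  finally show ?thesis using j by (simp add: sum_divide_distrib[symmetric])
qed

lemma odd_dft_pairing:
  "(\<Sum>j<n. cnj (z j) * (\<Sum>k<n. a k * odd_root n k ^ j)) = (\<Sum>k<n. a k * cnj (odd_dft n z k))"
  by (subst sum_swap_scaled) (simp add: odd_dft_def mult_ac)

lemma odd_dft_parseval:
  "(\<Sum>j<n. (cmod (z j))\<^sup>2) = (\<Sum>k<n. (cmod (odd_dft n z k))\<^sup>2) / real n"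
proof -
  have "(\<Sum>j<n. cnj (z j) * z j)
      = (\<Sum>j<n. cnj (z j) * (\<Sum>k<n. odd_dft n z k / of_nat n * odd_root n k ^ j))"
    by (intro sum.cong refl) (simp add: odd_dft_inversion[of _ n z])
  also have "\<dots> = (\<Sum>k<n. odd_dft n z k * cnj (odd_dft n z k)) / of_nat n"
    by (simp only: odd_dft_pairing) (simp add: sum_divide_distrib)
  finally have "of_real (\<Sum>j<n. (cmod (z j))\<^sup>2)
      = (of_real (\<Sum>k<n. (cmod (odd_dft n z k))\<^sup>2) / of_nat n :: complex)"
    by (simp only: cnj_mult_self complex_norm_square of_real_sum)
  hence "of_real (\<Sum>j<n. (cmod (z j))\<^sup>2)
      = (of_real ((\<Sum>k<n. (cmod (odd_dft n z k))\<^sup>2) / real n) :: complex)" by simp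
  thus ?thesis by (simp only: of_real_eq_iff)
qed

lemma sign_kernel_apply:
  assumes j: "j < n"
  shows "(\<Sum>l<n. (- \<i> * of_real (sign_kernel j l)) * z l)
       = (\<Sum>k<n. odd_dft n z k / of_nat n * of_real (cot ((2 * real k + 1) * pi / (2 * real n)))
                 * odd_root n k ^ j)"
proof -
  have "(\<Sum>l<n. (- \<i> * of_real (sign_kernel j l)) * z l)
      = (\<Sum>l<n. (- \<i> * of_real (sign_kernel j l)) * (\<Sum>k<n. odd_dft n z k / of_nat n * odd_root n k ^ l))"
    by (intro sum.cong refl) (simp add: odd_dft_inversion[of _ n z])
  also have "\<dots> = (\<Sum>k<n. odd_dft n z k / of_nat n
      * (\<Sum>l<n. (- \<i> * of_real (sign_kernel j l)) * odd_root n k ^ l))"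
    by (rule sum_swap_scaled)
  finally show ?thesis using sign_kernel_eigen[OF _ j] by (simp add: mult_ac)
qed

lemma sign_kernel_form_diagonal:
  "(\<Sum>j<n. cnj (z j) * (\<Sum>l<n. (- \<i> * of_real (sign_kernel j l)) * z l))
     = of_real (\<Sum>k<n. cot ((2 * real k + 1) * pi / (2 * real n)) * (cmod (odd_dft n z k))\<^sup>2 / real n)"
proof -
  define c where "c = odd_dft n z"
  define mu where "mu k = cot ((2 * real k + 1) * pi / (2 * real n))" for k
  have summand: "c k / of_nat n * of_real (mu k) * cnj (c k) = of_real (mu k * (cmod (c k))\<^sup>2 / real n)" for k
  proof -
    have "of_real (mu k * (cmod (c k))\<^sup>2 / real n) = of_real (mu k) * (c k * cnj (c k)) / of_nat n"
      by (simp only: of_real_mult of_real_divide of_real_of_nat_eq complex_norm_square)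
    thus ?thesis by (simp add: field_simps) metis
  qed
  have "(\<Sum>j<n. cnj (z j) * (\<Sum>l<n. (- \<i> * of_real (sign_kernel j l)) * z l))
      = (\<Sum>j<n. cnj (z j) * (\<Sum>k<n. c k / of_nat n * of_real (mu k) * odd_root n k ^ j))"
    unfolding c_def mu_def by (intro sum.cong refl) (simp only: sign_kernel_apply lessThan_iff)
  also have "\<dots> = (\<Sum>k<n. c k / of_nat n * of_real (mu k) * cnj (c k))"
    unfolding c_def by (rule odd_dft_pairing)
  also have "\<dots> = of_real (\<Sum>k<n. mu k * (cmod (c k))\<^sup>2 / real n)"
    by (simp only: summand of_real_sum)
  finally show ?thesis unfolding c_def mu_def .
qed

lemma sign_kernel_form_bound:
  fixes z :: "nat \<Rightarrow> complex"
  assumes n: "n > 0"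
  shows "(\<Sum>j<n. \<Sum>l<n. sign_kernel j l * Im (cnj (z j) * z l))
       \<le> cot (pi / (2 * real n)) * (\<Sum>j<n. (cmod (z j))\<^sup>2)"
proof -
  have "(\<Sum>j<n. \<Sum>l<n. sign_kernel j l * Im (cnj (z j) * z l))
      = Re (\<Sum>j<n. cnj (z j) * (\<Sum>l<n. (- \<i> * of_real (sign_kernel j l)) * z l))"
    by (simp add: Re_sum sum_distrib_left mult_ac right_diff_distrib)
  also have "\<dots> = (\<Sum>k<n. cot ((2 * real k + 1) * pi / (2 * real n)) * (cmod (odd_dft n z k))\<^sup>2 / real n)"
    unfolding sign_kernel_form_diagonal by (rule Re_complex_of_real)
  also have "\<dots> \<le> (\<Sum>k<n. cot (pi / (2 * real n)) * (cmod (odd_dft n z k))\<^sup>2 / real n)"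
    by (intro divide_right_mono sum_mono mult_right_mono) (auto simp: cot_odd_root_le)
  also have "\<dots> = cot (pi / (2 * real n)) * (\<Sum>j<n. (cmod (z j))\<^sup>2)"
    by (subst odd_dft_parseval[where n = n and z = z]) (simp add: sum_distrib_left sum_divide_distrib)
  finally show ?thesis .
qed

text \<open>To bound the sum of all |Im (cnj (x i) * x l)|, replace each entry by the
  representative of \<plusminus>x i in the half-open upper half-plane and sort the entries by
  argument; then every |Im| becomes sign_kernel times Im.\<close>
definition upper_rep :: "complex \<Rightarrow> complex" where
  "upper_rep a = (if Im a > 0 \<or> (Im a = 0 \<and> Re a \<ge> 0) then a else - a)"

lemma upper_rep_cases: "upper_rep a = a \<or> upper_rep a = - a"
  unfolding upper_rep_def by auto

lemma upper_rep_abs_Im: "\<bar>Im (cnj (upper_rep a) * upper_rep b)\<bar> = \<bar>Im (cnj a * b)\<bar>"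
  using upper_rep_cases[of a] upper_rep_cases[of b] by auto

lemma upper_rep_cmod: "cmod (upper_rep a) = cmod a"
  using upper_rep_cases[of a] by auto

lemma upper_rep_Arg:
  assumes "upper_rep a \<noteq> 0"
  shows "0 \<le> Arg (upper_rep a) \<and> Arg (upper_rep a) < pi"
proof -
  let ?b = "upper_rep a"
  have up: "Im ?b > 0 \<or> (Im ?b = 0 \<and> Re ?b \<ge> 0)" unfolding upper_rep_def by auto
  have "Arg ?b \<noteq> pi"
  proof
    assume "Arg ?b = pi"
    hence "Re ?b / cmod ?b = -1" "Im ?b / cmod ?b = 0"
      using cos_Arg[OF assms] sin_Arg[OF assms] by simp_all
    thus False using up assms by (auto simp: field_simps)
  qed
  moreover have "0 \<le> Arg ?b" using up assms by (intro Arg_nonneg_of_Im_nonneg) auto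
  ultimately show ?thesis using Arg_bounded[of ?b] by simp
qed

lemma Im_cnj_mult_nonneg_of_Arg_le:
  assumes a: "a = 0 \<or> (0 \<le> Arg a \<and> Arg a < pi)" and b: "b = 0 \<or> (0 \<le> Arg b \<and> Arg b < pi)"
    and le: "Arg a \<le> Arg b"
  shows "Im (cnj a * b) \<ge> 0"
proof (cases "a = 0 \<or> b = 0")
  case False
  hence "sin (Arg b - Arg a) \<ge> 0" using a b le by (intro sin_ge_zero) auto
  thus ?thesis using Im_cnj_mult_polar[of a b] False by simp
qed auto

lemma sorted_abs_Im:
  fixes z :: "nat \<Rightarrow> complex"
  assumes up: "\<And>k. z k = 0 \<or> (0 \<le> Arg (z k) \<and> Arg (z k) < pi)"
    and sorted: "\<And>k k'. k \<le> k' \<Longrightarrow> k' < n \<Longrightarrow> Arg (z k) \<le> Arg (z k')"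
    and k: "k < n" "k' < n"
  shows "\<bar>Im (cnj (z k) * z k')\<bar> = sign_kernel k k' * Im (cnj (z k) * z k')"
proof (cases k k' rule: linorder_cases)
  case less
  hence "Im (cnj (z k) * z k') \<ge> 0"
    using up sorted k by (intro Im_cnj_mult_nonneg_of_Arg_le) auto
  thus ?thesis using less by (simp add: sign_kernel_def)
next
  case greater
  hence "Im (cnj (z k') * z k) \<ge> 0"
    using up sorted k by (intro Im_cnj_mult_nonneg_of_Arg_le) auto
  moreover have "Im (cnj (z k') * z k) = - Im (cnj (z k) * z k')" by simp
  ultimately have "Im (cnj (z k) * z k') \<le> 0" by linarith
  moreover have "sign_kernel k k' = -1" using greater by (simp add: sign_kernel_def)
  ultimately show ?thesis by simp
qed (simp add: sign_kernel_def)

lemma abs_Im_pairs_bound: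
  fixes x :: "nat \<Rightarrow> complex"
  assumes n: "n > 0"
  shows "(\<Sum>i<n. \<Sum>l<n. \<bar>Im (cnj (x i) * x l)\<bar>) \<le> cot (pi / (2 * real n)) * (\<Sum>i<n. (cmod (x i))\<^sup>2)"
proof -
  define y where "y i = upper_rep (x i)" for i
  define xs where "xs = sort_key (\<lambda>i. Arg (y i)) [0..<n]"
  define z where "z k = y (xs ! k)" for k
  have len: "length xs = n" by (simp add: xs_def)
  have bij: "bij_betw ((!) xs) {..<n} {..<n}"
    by (rule bij_betw_nth) (auto simp: xs_def)
  have sorted: "Arg (z k) \<le> Arg (z k')" if "k \<le> k'" "k' < n" for k k'
    using sorted_sort_key[of "\<lambda>i. Arg (y i)" "[0..<n]"] that len
    unfolding z_def xs_def by (auto simp: sorted_iff_nth_mono)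
  have up: "z k = 0 \<or> (0 \<le> Arg (z k) \<and> Arg (z k) < pi)" for k
    using upper_rep_Arg unfolding z_def y_def by blast
  have "(\<Sum>i<n. \<Sum>l<n. \<bar>Im (cnj (x i) * x l)\<bar>) = (\<Sum>i<n. \<Sum>l<n. \<bar>Im (cnj (y i) * y l)\<bar>)"
    by (simp only: y_def upper_rep_abs_Im)
  also have "\<dots> = (\<Sum>k<n. \<Sum>k'<n. \<bar>Im (cnj (z k) * z k')\<bar>)"
    unfolding z_def
    by (subst sum.reindex_bij_betw[OF bij, symmetric], rule sum.cong[OF refl],
        rule sum.reindex_bij_betw[OF bij, symmetric])
  also have "\<dots> = (\<Sum>k<n. \<Sum>k'<n. sign_kernel k k' * Im (cnj (z k) * z k'))"
    using sorted_abs_Im[OF up sorted] by (intro sum.cong refl) auto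
  also have "\<dots> \<le> cot (pi / (2 * real n)) * (\<Sum>k<n. (cmod (z k))\<^sup>2)"
    by (rule sign_kernel_form_bound[OF n])
  also have "(\<Sum>k<n. (cmod (z k))\<^sup>2) = (\<Sum>i<n. (cmod (x i))\<^sup>2)"
    unfolding z_def y_def upper_rep_cmod by (rule sum.reindex_bij_betw[OF bij])
  finally show ?thesis .
qed


context laplacian_eigenpair
begin

lemma Im_rayleigh:
  "2 * Im lam * (\<Sum>i<n. (cmod (x i))\<^sup>2)
     = (\<Sum>i<n. \<Sum>l<n. (L i l - L l i) * Im (cnj (x i) * x l))"
proof -
  define T where "T = (\<Sum>i<n. \<Sum>l<n. L i l * Im (cnj (x i) * x l))"
  have Im_scale: "Im (of_real r * w) = r * Im w" for r w by simp
  have "lam * (\<Sum>i<n. cnj (x i) * x i) = (\<Sum>i<n. cnj (x i) * (lam * x i))"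
    by (simp add: sum_distrib_left mult_ac)
  also have "\<dots> = (\<Sum>i<n. \<Sum>l<n. of_real (L i l) * (cnj (x i) * x l))"
    by (simp add: eigen sum_distrib_left mult_ac flip: eigen)
  finally have "Im (lam * (\<Sum>i<n. cnj (x i) * x i)) = T"
    unfolding T_def by (simp only: Im_sum Im_scale)
  moreover have "(\<Sum>i<n. cnj (x i) * x i) = of_real (\<Sum>i<n. (cmod (x i))\<^sup>2)"
    by (simp only: cnj_mult_self of_real_sum)
  ultimately have "Im lam * (\<Sum>i<n. (cmod (x i))\<^sup>2) = T" by simp
  moreover have "T = - (\<Sum>i<n. \<Sum>l<n. L l i * Im (cnj (x i) * x l))"
  proof -
    have "T = (\<Sum>l<n. \<Sum>i<n. L i l * Im (cnj (x i) * x l))" unfolding T_def by (rule sum.swap)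
    also have "\<dots> = (\<Sum>i<n. \<Sum>l<n. - (L l i * Im (cnj (x i) * x l)))"
      by (intro sum.cong refl) (simp add: algebra_simps)
    finally show ?thesis by (simp add: sum_negf)
  qed
  moreover have "(\<Sum>i<n. \<Sum>l<n. (L i l - L l i) * Im (cnj (x i) * x l))
      = T - (\<Sum>i<n. \<Sum>l<n. L l i * Im (cnj (x i) * x l))"
    by (simp only: T_def left_diff_distrib sum_subtractf)
  ultimately show ?thesis by linarith
qed

end

lemma gershgorin:
  fixes M :: "nat \<Rightarrow> nat \<Rightarrow> real" and y :: "nat \<Rightarrow> complex"
  assumes eig: "\<And>i. i < n \<Longrightarrow> (\<Sum>l<n. of_real (M i l) * y l) = z * y i"
    and nz: "\<exists>i<n. y i \<noteq> 0"
  shows "\<exists>i<n. cmod (z - of_real (M i i)) \<le> (\<Sum>l\<in>{..<n}-{i}. \<bar>M i l\<bar>)"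
proof -
  have "n > 0" using nz by auto
  then obtain i where i: "i < n" "\<And>l. l < n \<Longrightarrow> cmod (y l) \<le> cmod (y i)"
    using ex_max_index[of n "\<lambda>l. cmod (y l)"] by auto
  have yi: "cmod (y i) > 0" using i(2) nz by fastforce
  have "(z - of_real (M i i)) * y i = (\<Sum>l\<in>{..<n}-{i}. of_real (M i l) * y l)"
    using eig[OF i(1)] i(1) by (simp add: algebra_simps sum.remove[of _ i])
  hence "cmod (z - of_real (M i i)) * cmod (y i) \<le> (\<Sum>l\<in>{..<n}-{i}. cmod (of_real (M i l) * y l))"
    by (metis norm_mult norm_sum)
  also have "\<dots> \<le> (\<Sum>l\<in>{..<n}-{i}. \<bar>M i l\<bar>) * cmod (y i)"
    using i(2) by (auto simp: norm_mult sum_distrib_right intro!: sum_mono mult_left_mono)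
  finally show ?thesis using yi i(1) by (meson mult_le_cancel_right_pos)
qed

lemma cis_complementary:
  "cis (pi / 2 - a) = Complex (sin a) (cos a)" "cis (- (pi / 2 - a)) = Complex (sin a) (- cos a)"
  by (simp_all add: complex_eq_iff cos_diff sin_diff)

lemma sector_in_closed_angle:
  fixes w :: complex
  assumes a: "0 < a" "a \<le> pi / 2" and re: "Re w \<ge> 0"
    and sector: "\<bar>Im w\<bar> * sin a \<le> cos a * Re w"
  shows "w \<in> closed_angle 0 (cis (- (pi / 2 - a))) (cis (pi / 2 - a))"
proof -
  have sin_a: "sin a > 0" using a by (intro sin_gt_zero) auto
  have "\<exists>s t. s \<ge> 0 \<and> t \<ge> 0 \<and> w = of_real s * cis (- (pi / 2 - a)) + of_real t * cis (pi / 2 - a)"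
  proof (cases "cos a = 0")
    case True
    hence "Im w = 0" using sector sin_a by (simp add: mult_le_0_iff)
    hence "w = of_real (Re w / (2 * sin a)) * cis (- (pi / 2 - a)) + of_real (Re w / (2 * sin a)) * cis (pi / 2 - a)"
      using True sin_a by (simp add: cos_diff sin_diff complex_eq_iff)
    moreover have "Re w / (2 * sin a) \<ge> 0" using re sin_a by simp
    ultimately show ?thesis by blast
  next
    case False
    hence cos_a: "cos a > 0" using a by (smt (verit) cos_ge_zero)
    define s where "s = (Re w / sin a - Im w / cos a) / 2"
    define t where "t = (Re w / sin a + Im w / cos a) / 2"
    have "\<bar>Im w\<bar> / cos a \<le> Re w / sin a" using sector sin_a cos_a by (simp add: field_simps)
    moreover have "\<bar>Im w\<bar> / cos a = \<bar>Im w / cos a\<bar>" using cos_a by simp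
    ultimately have bound: "\<bar>Im w / cos a\<bar> \<le> Re w / sin a" by simp
    have "Im w / cos a \<le> Re w / sin a" "- (Im w / cos a) \<le> Re w / sin a"
      using abs_le_D1[OF bound] abs_le_D2[OF bound] .
    hence "s \<ge> 0" "t \<ge> 0" by (simp_all add: s_def t_def)
    moreover have "w = of_real s * cis (- (pi / 2 - a)) + of_real t * cis (pi / 2 - a)"
      unfolding cis_complementary using sin_a cos_a
      by (simp add: complex_eq_iff s_def t_def field_simps)
    ultimately show ?thesis by blast
  qed
  thus ?thesis unfolding closed_angle_def by auto
qed

lemma one_minus_cis_double:
  "1 - cis (2 * a) = of_real (2 * sin a) * cis (- (pi / 2 - a))"
  "1 - cis (- (2 * a)) = of_real (2 * sin a) * cis (pi / 2 - a)"
  by (simp_all add: cos_diff sin_diff complex_eq_iff cos_double_sin sin_double power2_eq_square)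

text \<open>The reflection z \<mapsto> 1 - z maps the angle at 0 onto the angle at 1 whose sides pass
  through cis (\<plusminus>2a): the directions 1 - cis (\<plusminus>2a) are positive multiples of cis (\<mp>(pi/2 - a)).\<close>
lemma closed_angle_reflect:
  assumes sin_a: "sin a > 0"
    and z: "1 - z \<in> closed_angle 0 (cis (- (pi / 2 - a))) (cis (pi / 2 - a))"
  shows "z \<in> closed_angle 1 (cis (- (2 * a))) (cis (2 * a))"
proof -
  obtain s t where st: "s \<ge> 0" "t \<ge> 0"
    and eq: "1 - z = of_real s * cis (- (pi / 2 - a)) + of_real t * cis (pi / 2 - a)"
    using z unfolding closed_angle_def by auto
  have u1: "cis (- (pi / 2 - a)) = (1 - cis (2 * a)) / of_real (2 * sin a)"
    and u2: "cis (pi / 2 - a) = (1 - cis (- (2 * a))) / of_real (2 * sin a)"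
    using one_minus_cis_double[of a] sin_a by (simp_all add: field_simps)
  have "z = 1 - (of_real s * cis (- (pi / 2 - a)) + of_real t * cis (pi / 2 - a))"
    using eq by (simp add: algebra_simps)
  also have "\<dots> = 1 + of_real (t / (2 * sin a)) * (cis (- (2 * a)) - 1)
      + of_real (s / (2 * sin a)) * (cis (2 * a) - 1)"
    unfolding u1 u2 using sin_a by (simp add: field_simps)
  finally have "z = \<dots>" .
  moreover have "s / (2 * sin a) \<ge> 0" "t / (2 * sin a) \<ge> 0" using st sin_a by simp_all
  ultimately show ?thesis unfolding closed_angle_def mem_Collect_eq by blast
qed

text \<open>The part of the target region around the vertex 0: the disk around 1 - 1/n and the
  sector of half-opening pi/2 - pi/n. The theorem says that both z and 1 - z lie in it.\<close>
definition sector_disk :: "nat \<Rightarrow> complex \<Rightarrow> bool" where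
  "sector_disk n w \<longleftrightarrow> cmod (w - of_real (1 - 1 / real n)) \<le> 1 - 1 / real n
     \<and> Re w \<ge> 0 \<and> \<bar>Im w\<bar> * sin (pi / n) \<le> cos (pi / n) * Re w"

lemma regions_of_sector_disk:
  assumes n2: "n \<ge> 2" and z: "sector_disk n z" and z': "sector_disk n (1 - z)"
  shows "cmod (z - of_real (1 / real n)) \<le> 1 - 1 / real n"
    and "cmod (z - of_real (1 - 1 / real n)) \<le> 1 - 1 / real n"
    and "z \<in> closed_angle 1 (cis (- 2 * pi / real n)) (cis (2 * pi / real n))"
    and "z \<in> closed_angle 0 (cis (- (pi / 2 - pi / real n))) (cis (pi / 2 - pi / real n))"
proof -
  note a = pi_div_bounds[OF n2]
  have "cmod (1 - z - of_real (1 - 1 / real n)) = cmod (z - of_real (1 / real n))"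
  proof -
    have "1 - z - of_real (1 - 1 / real n) = - (z - of_real (1 / real n))" by (simp add: algebra_simps)
    thus ?thesis by (simp only: norm_minus_cancel)
  qed
  thus "cmod (z - of_real (1 / real n)) \<le> 1 - 1 / real n" using z' unfolding sector_disk_def by simp
  show "cmod (z - of_real (1 - 1 / real n)) \<le> 1 - 1 / real n" using z unfolding sector_disk_def by simp
  show "z \<in> closed_angle 0 (cis (- (pi / 2 - pi / real n))) (cis (pi / 2 - pi / real n))"
    using z a unfolding sector_disk_def by (intro sector_in_closed_angle) auto
  have "1 - z \<in> closed_angle 0 (cis (- (pi / 2 - pi / real n))) (cis (pi / 2 - pi / real n))"
    using z' a unfolding sector_disk_def by (intro sector_in_closed_angle) auto
  moreover have "sin (pi / real n) > 0" using a by simp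
  ultimately have "z \<in> closed_angle 1 (cis (- (2 * (pi / real n)))) (cis (2 * (pi / real n)))"
    by (rule closed_angle_reflect[rotated])
  thus "z \<in> closed_angle 1 (cis (- 2 * pi / real n)) (cis (2 * pi / real n))" by simp
qed

locale std_laplacian_eigenpair = laplacian_eigenpair +
  assumes off_diag_lower: "\<And>i l. i < n \<Longrightarrow> l < n \<Longrightarrow> i \<noteq> l \<Longrightarrow> L i l \<ge> - 1 / real n"
begin

text \<open>The band: the skew part of L has entries of size at most 1/n.\<close>
lemma band: "\<bar>Im lam\<bar> \<le> 1 / (2 * real n) * cot (pi / (2 * real n))"
proof -
  define S where "S = (\<Sum>i<n. (cmod (x i))\<^sup>2)"
  have S_pos: "S > 0"
  proof -
    obtain k where k: "k < n" "x k \<noteq> 0" using nonzero by auto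
    have "(cmod (x k))\<^sup>2 \<le> S" unfolding S_def using k by (intro member_le_sum) auto
    thus ?thesis using k by (smt (verit) zero_less_norm_iff zero_less_power)
  qed
  have "2 * \<bar>Im lam\<bar> * S = \<bar>2 * Im lam * S\<bar>" using S_pos by (simp add: abs_mult)
  also have "\<dots> = \<bar>\<Sum>i<n. \<Sum>l<n. (L i l - L l i) * Im (cnj (x i) * x l)\<bar>"
    by (simp only: S_def Im_rayleigh)
  also have "\<dots> \<le> (\<Sum>i<n. \<Sum>l<n. \<bar>L i l - L l i\<bar> * \<bar>Im (cnj (x i) * x l)\<bar>)"
    by (rule order_trans[OF sum_abs sum_mono]) (simp add: order_trans[OF sum_abs] abs_mult)
  also have "\<dots> \<le> (\<Sum>i<n. \<Sum>l<n. 1 / real n * \<bar>Im (cnj (x i) * x l)\<bar>)"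
  proof (intro sum_mono mult_right_mono)
    fix i l assume "i \<in> {..<n}" "l \<in> {..<n}"
    thus "\<bar>L i l - L l i\<bar> \<le> 1 / real n"
      using off_diag_lower[of i l] off_diag_lower[of l i]
        off_diag_nonpos[of i l] off_diag_nonpos[of l i] by (cases "i = l") auto
  qed simp
  also have "\<dots> = 1 / real n * (\<Sum>i<n. \<Sum>l<n. \<bar>Im (cnj (x i) * x l)\<bar>)"
    by (simp only: sum_distrib_left)
  also have "\<dots> \<le> 1 / real n * (cot (pi / (2 * real n)) * S)"
    unfolding S_def by (rule mult_left_mono[OF abs_Im_pairs_bound[OF n_pos]]) simp
  finally have "(2 * \<bar>Im lam\<bar>) * S \<le> (1 / real n * cot (pi / (2 * real n))) * S"
    by (simp only: mult.assoc)
  hence "2 * \<bar>Im lam\<bar> \<le> 1 / real n * cot (pi / (2 * real n))"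
    using S_pos by (simp only: mult_le_cancel_right_pos)
  thus ?thesis using n_pos by (simp add: field_simps)
qed

lemma diagonal_entry:
  assumes i: "i < n"
  shows "(\<Sum>l\<in>{..<n}-{i}. \<bar>L i l\<bar>) = L i i" and "0 \<le> L i i" and "L i i \<le> 1 - 1 / real n"
proof -
  have "L i i + (\<Sum>l\<in>{..<n}-{i}. L i l) = 0"
    using row_sum[OF i] i by (simp add: sum.remove[of _ i])
  moreover have "(\<Sum>l\<in>{..<n}-{i}. \<bar>L i l\<bar>) = (\<Sum>l\<in>{..<n}-{i}. - L i l)"
    using off_diag_nonpos i by (intro sum.cong refl) auto
  ultimately show offdiag: "(\<Sum>l\<in>{..<n}-{i}. \<bar>L i l\<bar>) = L i i" by (simp add: sum_negf)
  thus "0 \<le> L i i" by (simp add: sum_nonneg flip: offdiag)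
  have "(\<Sum>l\<in>{..<n}-{i}. \<bar>L i l\<bar>) \<le> (\<Sum>l\<in>{..<n}-{i}. 1 / real n)"
  proof (intro sum_mono)
    fix l assume "l \<in> {..<n} - {i}"
    thus "\<bar>L i l\<bar> \<le> 1 / real n" using off_diag_lower[OF i, of l] off_diag_nonpos[OF i, of l] by auto
  qed
  also have "\<dots> = 1 - 1 / real n" using i by (simp add: of_nat_diff field_simps)
  finally show "L i i \<le> 1 - 1 / real n" using offdiag by simp
qed

text \<open>Gershgorin disks of a standardized Laplacian all lie in one disk around 1 - 1/n.\<close>
lemma disk_right: "cmod (lam - of_real (1 - 1 / real n)) \<le> 1 - 1 / real n"
proof -
  obtain i where i: "i < n" "cmod (lam - of_real (L i i)) \<le> (\<Sum>l\<in>{..<n}-{i}. \<bar>L i l\<bar>)"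
    using gershgorin[of n L x lam] eigen nonzero by auto
  have "cmod (lam - of_real (1 - 1 / real n))
      \<le> cmod (lam - of_real (L i i)) + cmod (of_real (L i i) - of_real (1 - 1 / real n) :: complex)"
    using dist_triangle[of lam "of_real (1 - 1 / real n)" "of_real (L i i)"]
    unfolding dist_norm by (simp only: norm_minus_commute[of "of_real (1 - 1 / real n)"])
  also have "cmod (of_real (L i i) - of_real (1 - 1 / real n) :: complex) = (1 - 1 / real n) - L i i"
    using diagonal_entry(3)[OF i(1)] by (simp flip: of_real_diff)
  finally show ?thesis using i(2) diagonal_entry(1)[OF i(1)] by simp
qed

text \<open>The complementary matrix I - L - J/n (J the all-ones matrix) is again a standardized
  Laplacian; for lam \<notin> {0, 1} it has the eigenvalue 1 - lam, with eigenvector x shifted by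
  a constant.\<close>
lemma complement_eigen_equation:
  assumes i: "i < n" and c: "(\<Sum>l<n. x l + c) / of_nat n = lam * c"
  shows "(\<Sum>l<n. of_real ((if i = l then 1 else 0) - L i l - 1 / real n) * (x l + c)) = (1 - lam) * (x i + c)"
proof -
  define y where "y l = x l + c" for l
  have "of_real ((if i = l then 1 else 0) - L i l - 1 / real n) * y l
      = (if i = l then y l else 0) - of_real (L i l) * y l - y l / of_nat n" for l
    by (simp add: algebra_simps)
  hence "(\<Sum>l<n. of_real ((if i = l then 1 else 0) - L i l - 1 / real n) * y l)
      = y i - (\<Sum>l<n. of_real (L i l) * y l) - (\<Sum>l<n. y l) / of_nat n"
    using i by (simp add: sum_subtractf sum_divide_distrib)
  also have "(\<Sum>l<n. of_real (L i l) * y l) = lam * x i + of_real (\<Sum>l<n. L i l) * c"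
    using eigen[OF i] by (simp add: y_def algebra_simps sum.distrib sum_distrib_left)
  also have "y i - (lam * x i + of_real (\<Sum>l<n. L i l) * c) - (\<Sum>l<n. y l) / of_nat n = (1 - lam) * y i"
    using row_sum[OF i] c by (simp add: y_def algebra_simps)
  finally show ?thesis by (simp add: y_def)
qed

lemma complement_eigenpair:
  assumes lam0: "lam \<noteq> 0" and lam1: "lam \<noteq> 1"
  shows "\<exists>y. std_laplacian_eigenpair n (\<lambda>i l. (if i = l then 1 else 0) - L i l - 1 / real n) y (1 - lam)"
proof -
  define c where "c = (\<Sum>l<n. x l) / (of_nat n * (lam - 1))"
  have n0: "real n > 0" using n_pos by simp
  have "(\<Sum>l<n. x l + c) = (\<Sum>l<n. x l) + of_nat n * c" by (simp add: sum.distrib)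
  also have "(\<Sum>l<n. x l) = of_nat n * (lam - 1) * c" using n0 lam1 by (simp add: c_def)
  finally have c: "(\<Sum>l<n. x l + c) / of_nat n = lam * c"
    using n0 by (simp add: field_simps)
  show ?thesis
  proof (intro exI[of _ "\<lambda>l. x l + c"] std_laplacian_eigenpair.intro laplacian_eigenpair.intro
      std_laplacian_eigenpair_axioms.intro)
    fix i assume i: "i < n"
    show "(\<Sum>l<n. (if i = l then 1 else 0) - L i l - 1 / real n) = 0"
      using row_sum[OF i] i n0 by (simp add: sum_subtractf)
    show "(\<Sum>l<n. of_real ((if i = l then 1 else 0) - L i l - 1 / real n) * (x l + c)) = (1 - lam) * (x i + c)"
      by (rule complement_eigen_equation[OF i c])
  next
    fix i l assume il: "i < n" "l < n" "i \<noteq> l"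
    show "(if i = l then 1 else 0) - L i l - 1 / real n \<le> 0"
      using off_diag_lower[OF il] il(3) by simp
    show "(if i = l then 1 else 0) - L i l - 1 / real n \<ge> - 1 / real n"
      using off_diag_nonpos[OF il] il(3) by simp
  next
    obtain l where "l < n" "x l \<noteq> x 0" using eigenvector_nonconstant[OF lam0 n_pos] by auto
    thus "\<exists>i<n. x i + c \<noteq> 0" using n_pos by (metis add.right_cancel add.right_neutral)
  qed
qed

lemma sector_disk_eigenvalue: "n \<ge> 2 \<Longrightarrow> sector_disk n lam"
  using disk_right Re_nonneg sector unfolding sector_disk_def by blast

text \<open>By the complement symmetry, 1 - lam lies in the same region; the eigenvalues 0 and 1,
  where the complement has no matching eigenvector, are checked directly.\<close>
lemma sector_disk_reflected:
  assumes n2: "n \<ge> 2"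
  shows "sector_disk n (1 - lam)"
proof (cases "lam = 0 \<or> lam = 1")
  case True
  then obtain r where r: "1 - lam = of_real r" "r = 0 \<or> r = 1" by force
  have "cmod (of_real r - of_real (1 - 1 / real n) :: complex) = \<bar>r - (1 - 1 / real n)\<bar>"
    by (simp only: of_real_diff[symmetric] norm_of_real)
  moreover have "1 / real n \<le> 1 - 1 / real n" using n2 by (simp add: field_simps)
  ultimately show ?thesis using r pi_div_bounds[OF n2] unfolding sector_disk_def by auto
next
  case False
  then obtain y where "std_laplacian_eigenpair n (\<lambda>i l. (if i = l then 1 else 0) - L i l - 1 / real n) y (1 - lam)"
    using complement_eigenpair by blast
  thus ?thesis using std_laplacian_eigenpair.sector_disk_eigenvalue n2 by blast
qed

end

lemma std_laplacian_eigenpair_of_matrix: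
  assumes A: "standardized_laplacian n A" and z: "eigenvalue (map_mat complex_of_real A) z"
  shows "\<exists>x. std_laplacian_eigenpair n (\<lambda>i l. A $$ (i, l)) x z"
proof -
  have dim: "A \<in> carrier_mat n n" using A unfolding standardized_laplacian_def by blast
  obtain v where v: "v \<in> carrier_vec n" "v \<noteq> 0\<^sub>v n" "map_mat complex_of_real A *\<^sub>v v = z \<cdot>\<^sub>v v"
    using z dim unfolding eigenvalue_def eigenvector_def by auto
  have eig: "(\<Sum>l<n. of_real (A $$ (i, l)) * v $ l) = z * v $ i" if i: "i < n" for i
  proof -
    have "(map_mat complex_of_real A *\<^sub>v v) $ i = z * v $ i" using v(1,3) i by simp
    thus ?thesis using i v(1) dim by (simp add: scalar_prod_def atLeast0LessThan)
  qed
  have nz: "\<exists>i<n. v $ i \<noteq> 0"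
    using v(1,2) by (auto simp: vec_eq_iff)
  have rows: "\<And>i. i < n \<Longrightarrow> (\<Sum>l<n. A $$ (i, l)) = 0"
    and off: "\<And>i l. i < n \<Longrightarrow> l < n \<Longrightarrow> i \<noteq> l \<Longrightarrow> A $$ (i, l) \<le> 0 \<and> \<bar>A $$ (i, l)\<bar> \<le> 1 / real n"
    using A unfolding standardized_laplacian_def by blast+
  show ?thesis
  proof (intro exI[of _ "\<lambda>i. v $ i"] std_laplacian_eigenpair.intro laplacian_eigenpair.intro
      std_laplacian_eigenpair_axioms.intro)
    fix i l assume il: "i < n" "l < n" "i \<noteq> l"
    show "A $$ (i, l) \<le> 0" using off[OF il] by simp
    show "- 1 / real n \<le> A $$ (i, l)" using off[OF il] by (simp add: abs_le_iff)
  qed (use rows eig nz in auto)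
qed

theorem theorem8:
  fixes n :: nat and A :: "real mat" and z :: complex
  assumes "n \<ge> 2"
    and "standardized_laplacian n A"
    and "eigenvalue (map_mat complex_of_real A) z"
  shows "cmod (z - complex_of_real (1 / real n)) \<le> 1 - 1 / real n
       \<and> cmod (z - complex_of_real (1 - 1 / real n)) \<le> 1 - 1 / real n
       \<and> z \<in> closed_angle 1 (cis (- 2 * pi / real n)) (cis (2 * pi / real n))
       \<and> z \<in> closed_angle 0 (cis (- (pi / 2 - pi / real n))) (cis (pi / 2 - pi / real n))
       \<and> \<bar>Im z\<bar> \<le> 1 / (2 * real n) * cot (pi / (2 * real n))"
proof -
  obtain x where "std_laplacian_eigenpair n (\<lambda>i l. A $$ (i, l)) x z"
    using std_laplacian_eigenpair_of_matrix[OF assms(2,3)] by blast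
  then interpret std_laplacian_eigenpair n "\<lambda>i l. A $$ (i, l)" x z .
  show ?thesis
    using regions_of_sector_disk[OF assms(1) sector_disk_eigenvalue[OF assms(1)]
        sector_disk_reflected[OF assms(1)]] band
    by blast
qed

end
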